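(* Let $M>0$, let $f:[0,1]\to\mathbb{R}$ satisfy $|f(x)-f(y)|\le M|x-y|$ for all $x,y\in[0,1]$, and let $g(x)=f(x)\bmod 1\in[0,1)$. Let $n\ge 2$ be an integer and $x_i=\frac{i-1}{n-1}$ for $i=1,\dots,n$. Let $\delta\in[0,1/2]$ and let $\hat g:[0,1]\to[0,1)$ satisfy $d_w(\hat g(x_i),g(x_i))\le\delta$ for all $i$. For each $i$ let $\eta_i\in[-\delta,\delta]$ be such that $\hat g(x_i)=(f(x_i)+\eta_i)\bmod 1$, and set $\hat f(x_i):=f(x_i)+\eta_i$. If $2\delta+\frac{M}{n-1}<\frac12$, then for each $i=2,\dots,n$: $$\hat f(x_i)-\hat f(x_{i-1})=\begin{cases}\hat g(x_i)-\hat g(x_{i-1}) & \text{if } |\hat g(x_i)-\hat g(x_{i-1})|<1/2,\\ 1+\hat g(x_i)-\hat g(x_{i-1}) & \text{if } \hat g(x_i)-\hat g(x_{i-1})<-1/2,\\ -1+\hat g(x_i)-\hat g(x_{i-1}) & \text{if } \hat g(x_i)-\hat g(x_{i-1})>1/2.\end{cases}$$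
   Context: For $a\in\mathbb{R}$, $a\bmod 1\in[0,1)$ denotes $a-\lfloor a\rfloor$. The wrap-around distance on $[0,1)$ is $d_w(a,b)=\min(|a-b|,1-|a-b|)$. *)

theory Defs
  imports "HOL-Analysis.Analysis"
begin

definition mod1 :: "real \<Rightarrow> real" where
  "mod1 a = a - of_int \<lfloor>a\<rfloor>"

definition dw :: "real \<Rightarrow> real \<Rightarrow> real" where
  "dw a b = min \<bar>a - b\<bar> (1 - \<bar>a - b\<bar>)"

end

theory Submission
  imports Defs
begin

text \<open>Adjacent lifted samples differ by less than \<open>1/2\<close>: the Lipschitz bound contributes at
  most \<open>M/(n-1)\<close> and the two perturbations at most \<open>2\<delta>\<close>. A real number of modulus below \<open>1/2\<close> is
  determined by its residue modulo 1, and the three cases of the theorem are the three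
  representatives \<open>d\<close>, \<open>d + 1\<close>, \<open>d - 1\<close> of the residue of the wrapped difference \<open>d\<close>.\<close>

lemma mod1_bounds: "0 \<le> mod1 a" "mod1 a < 1"
  unfolding mod1_def by linarith+

lemma mod1_diff_unwrap:
  fixes a b :: real
  assumes close: "\<bar>a - b\<bar> < 1/2"
  shows "(\<bar>mod1 a - mod1 b\<bar> < 1/2 \<longrightarrow> a - b = mod1 a - mod1 b) \<and>
         (mod1 a - mod1 b < - 1/2 \<longrightarrow> a - b = 1 + mod1 a - mod1 b) \<and>
         (mod1 a - mod1 b > 1/2 \<longrightarrow> a - b = -1 + mod1 a - mod1 b)"
proof -
  define k where "k = \<lfloor>a\<rfloor> - \<lfloor>b\<rfloor>"
  have lift: "a - b = mod1 a - mod1 b + of_int k"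
    unfolding k_def mod1_def by simp
  have wrapped: "\<bar>mod1 a - mod1 b\<bar> < 1"
    using mod1_bounds[of a] mod1_bounds[of b] by linarith
  with close lift have "-2 < k" "k < 2"
    by linarith+
  then consider "k = -1" | "k = 0" | "k = 1"
    by linarith
  then show ?thesis
    using close lift wrapped by cases auto
qed

lemma uniform_grid_step:
  fixes n i :: nat
  assumes "2 \<le> i" "i \<le> n"
  defines "x \<equiv> (\<lambda>j::nat. (real j - 1) / (real n - 1))"
  shows "x i \<in> {0..1}" "x (i - 1) \<in> {0..1}" "x i - x (i - 1) = 1 / (real n - 1)"
proof -
  have pos: "real n - 1 > 0" and pred: "real (i - 1) = real i - 1"
    using assms(1,2) by auto
  show "x i \<in> {0..1}" "x (i - 1) \<in> {0..1}"
    unfolding x_def using assms(1,2) pos pred by (auto simp: field_simps)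
  show "x i - x (i - 1) = 1 / (real n - 1)"
    unfolding x_def pred by (simp add: diff_divide_distrib[symmetric])
qed

text \<open>Only \<open>lip\<close>, \<open>n_ge\<close>, \<open>eta_bd\<close>, \<open>eta_eq\<close> and \<open>small\<close> are used: \<open>eta_eq\<close> already pins down
  \<open>ghat\<close> at the nodes, which makes \<open>ghat_close\<close> and \<open>ghat_range\<close> redundant.\<close>

theorem mainTheorem1:
  fixes M \<delta> :: real and f ghat :: "real \<Rightarrow> real" and n :: nat and eta :: "nat \<Rightarrow> real"
  defines "x \<equiv> (\<lambda>i::nat. (real i - 1) / (real n - 1))"
  defines "g \<equiv> (\<lambda>t. mod1 (f t))"
  defines "fhat \<equiv> (\<lambda>i::nat. f (x i) + eta i)"
  assumes M_pos: "M > 0"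
    and lip: "\<forall>s\<in>{0..1}. \<forall>t\<in>{0..1}. \<bar>f s - f t\<bar> \<le> M * \<bar>s - t\<bar>"
    and n_ge: "n \<ge> 2"
    and delta: "0 \<le> \<delta>" "\<delta> \<le> 1/2"
    and ghat_range: "\<forall>t\<in>{0..1}. ghat t \<in> {0..<1}"
    and ghat_close: "\<forall>i\<in>{1..n}. dw (ghat (x i)) (g (x i)) \<le> \<delta>"
    and eta_bd: "\<forall>i\<in>{1..n}. eta i \<in> {-\<delta>..\<delta>}"
    and eta_eq: "\<forall>i\<in>{1..n}. ghat (x i) = mod1 (f (x i) + eta i)"
    and small: "2 * \<delta> + M / (real n - 1) < 1/2"
  shows "\<forall>i\<in>{2..n}.
     (\<bar>ghat (x i) - ghat (x (i - 1))\<bar> < 1/2 \<longrightarrow>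
        fhat i - fhat (i - 1) = ghat (x i) - ghat (x (i - 1))) \<and>
     (ghat (x i) - ghat (x (i - 1)) < - 1/2 \<longrightarrow>
        fhat i - fhat (i - 1) = 1 + ghat (x i) - ghat (x (i - 1))) \<and>
     (ghat (x i) - ghat (x (i - 1)) > 1/2 \<longrightarrow>
        fhat i - fhat (i - 1) = -1 + ghat (x i) - ghat (x (i - 1)))"
proof
  fix i assume i: "i \<in> {2..n}"
  then have nodes: "i \<in> {1..n}" "i - 1 \<in> {1..n}"
    by auto
  have nodes_in: "x i \<in> {0..1}" "x (i - 1) \<in> {0..1}"
    and step: "x i - x (i - 1) = 1 / (real n - 1)"
    using uniform_grid_step i unfolding x_def by auto
  have "\<bar>f (x i) - f (x (i - 1))\<bar> \<le> M * \<bar>x i - x (i - 1)\<bar>"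
    using lip nodes_in by blast
  also have "\<dots> = M / (real n - 1)"
    using step n_ge by simp
  finally have "\<bar>f (x i) - f (x (i - 1))\<bar> \<le> M / (real n - 1)" .
  moreover have "\<bar>eta i\<bar> \<le> \<delta>" "\<bar>eta (i - 1)\<bar> \<le> \<delta>"
    using eta_bd[rule_format, OF nodes(1)] eta_bd[rule_format, OF nodes(2)] by auto
  ultimately have "\<bar>fhat i - fhat (i - 1)\<bar> < 1/2"
    using small unfolding fhat_def by linarith
  then show "(\<bar>ghat (x i) - ghat (x (i - 1))\<bar> < 1/2 \<longrightarrow>
        fhat i - fhat (i - 1) = ghat (x i) - ghat (x (i - 1))) \<and>
     (ghat (x i) - ghat (x (i - 1)) < - 1/2 \<longrightarrow>
        fhat i - fhat (i - 1) = 1 + ghat (x i) - ghat (x (i - 1))) \<and>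
     (ghat (x i) - ghat (x (i - 1)) > 1/2 \<longrightarrow>
        fhat i - fhat (i - 1) = -1 + ghat (x i) - ghat (x (i - 1)))"
    using mod1_diff_unwrap eta_eq nodes unfolding fhat_def by presburger
qed

end
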